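(* Let $N=\{1,\dots,n\}$, let $F:2^N\to\mathbb{R}$ be quasi-submodular, and run the minimization procedure (described in the context) from an arbitrary $X_0\subseteq N$. Then for every iteration $t$ other than the last one (i.e., every $t$ with $X_{t+1}\neq X_t$), $F(X_{t+1})<F(X_t)$.
   Context: For $A\subseteq N$ and $i\in N$, write $A+i=A\cup\{i\}$, $A-i=A\setminus\{i\}$, and $F(i\mid A)=F(A+i)-F(A)$. $F$ is quasi-submodular if for all $X,Y\subseteq N$ both hold: $F(X\cap Y)\ge F(X)\Rightarrow F(Y)\ge F(X\cup Y)$, and $F(X\cap Y)>F(X)\Rightarrow F(Y)>F(X\cup Y)$. Minimization procedure: given $X_0\subseteq N$, for $t=0,1,2,\dots$: let $U_t=\{u\in N\setminus X_t: F(u\mid X_t)<0\}$ and $Y_t=X_t\cup U_t$; let $D_t=\{d\in X_t: F(d\mid Y_t-d)>0\}$ and $X_{t+1}=Y_t\setminus D_t$; if $X_{t+1}=X_t$, stop and output $X_t$; otherwise continue with $t+1$. *)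

theory Defs
  imports Complex_Main
begin

definition gain :: "('a set \<Rightarrow> real) \<Rightarrow> 'a \<Rightarrow> 'a set \<Rightarrow> real" where
  "gain F i A = F (insert i A) - F A"

definition quasi_submodular :: "'a set \<Rightarrow> ('a set \<Rightarrow> real) \<Rightarrow> bool" where
  "quasi_submodular V F \<longleftrightarrow>
     (\<forall>X Y. X \<subseteq> V \<longrightarrow> Y \<subseteq> V \<longrightarrow>
        (F (X \<inter> Y) \<ge> F X \<longrightarrow> F Y \<ge> F (X \<union> Y)) \<and>
        (F (X \<inter> Y) > F X \<longrightarrow> F Y > F (X \<union> Y)))"

definition mm_step :: "'a set \<Rightarrow> ('a set \<Rightarrow> real) \<Rightarrow> 'a set \<Rightarrow> 'a set" where
  "mm_step V F X =
     (let U = {u \<in> V - X. gain F u X < 0};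
          Y = X \<union> U;
          D = {d \<in> X. gain F d (Y - {d}) > 0}
      in Y - D)"

text \<open>The t-th iterate X_t starting from X_0. Once X_{t+1} = X_t the sequence is constant,
  so the procedure stopping corresponds to reaching a fixed point.\<close>
definition mm_iter :: "'a set \<Rightarrow> ('a set \<Rightarrow> real) \<Rightarrow> 'a set \<Rightarrow> nat \<Rightarrow> 'a set" where
  "mm_iter V F X0 t = (mm_step V F ^^ t) X0"

end

theory Submission
  imports Defs
begin

text \<open>Quasi-submodularity makes single-element improvements persist: an element whose
  addition lowers F at X still lowers it at every superset of X, and an element whose
  removal lowers F at Y still lowers it at every subset of Y containing it. Hence adding
  the elements of U_t one by one strictly decreases F, and so does deleting those of D_t
  one by one from Y_t; an iteration that changes X_t has U_t or D_t nonempty.\<close>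

lemma quasi_submodular_insert_less_mono:
  assumes "quasi_submodular V F" "X \<subseteq> A" "A \<subseteq> V" "u \<in> V" "u \<notin> A"
    and "F (insert u X) < F X"
  shows "F (insert u A) < F A"
proof -
  have "insert u X \<inter> A = X" "insert u X \<union> A = insert u A"
    using assms(2,5) by auto
  moreover have "insert u X \<subseteq> V" using assms(2-4) by auto
  ultimately show ?thesis
    using assms(1,3,6) unfolding quasi_submodular_def by metis
qed

lemma quasi_submodular_remove_less_anti:
  assumes "quasi_submodular V F" "d \<in> B" "B \<subseteq> Y" "Y \<subseteq> V"
    and "F (Y - {d}) < F Y"
  shows "F (B - {d}) < F B"
proof (rule ccontr)
  assume "\<not> F (B - {d}) < F B"
  moreover have "B \<inter> (Y - {d}) = B - {d}" "B \<union> (Y - {d}) = Y"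
    using assms(2,3) by auto
  moreover have "B \<subseteq> V" "Y - {d} \<subseteq> V" using assms(3,4) by auto
  ultimately show False
    using assms(1,5) unfolding quasi_submodular_def by (metis not_less)
qed

lemma quasi_submodular_union_improving_less:
  assumes q: "quasi_submodular V F" and "finite S" "S \<noteq> {}" "S \<subseteq> V" "X \<subseteq> V"
    and "X \<inter> S = {}" "\<forall>u\<in>S. F (insert u X) < F X"
  shows "F (X \<union> S) < F X"
  using assms(2-7)
proof (induction S rule: finite_ne_induct)
  case (singleton u)
  then show ?case by simp
next
  case (insert u S)
  then have "F (insert u (X \<union> S)) < F (X \<union> S)"
    using quasi_submodular_insert_less_mono[OF q, of X "X \<union> S" u] by auto
  with insert show ?case by auto
qed

lemma quasi_submodular_diff_improving_less:
  assumes q: "quasi_submodular V F" and "finite S" "S \<noteq> {}" "S \<subseteq> Y" "Y \<subseteq> V"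
    and "\<forall>d\<in>S. F (Y - {d}) < F Y"
  shows "F (Y - S) < F Y"
  using assms(2-6)
proof (induction S rule: finite_ne_induct)
  case (singleton d)
  then show ?case by simp
next
  case (insert d S)
  have "Y - insert d S = (Y - S) - {d}" by auto
  moreover have "F ((Y - S) - {d}) < F (Y - S)"
    using quasi_submodular_remove_less_anti[OF q, of d "Y - S" Y] insert by auto
  ultimately show ?case using insert by auto
qed

lemma mm_iter_subset: "X0 \<subseteq> V \<Longrightarrow> mm_iter V F X0 t \<subseteq> V"
  unfolding mm_iter_def by (induction t) (auto simp: mm_step_def Let_def)

lemma mm_step_less:
  assumes q: "quasi_submodular V F" and fin: "finite V" and XV: "X \<subseteq> V"
    and moved: "mm_step V F X \<noteq> X"
  shows "F (mm_step V F X) < F X"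
proof -
  define U where "U = {u \<in> V - X. gain F u X < 0}"
  define Y where "Y = X \<union> U"
  define D where "D = {d \<in> X. gain F d (Y - {d}) > 0}"
  have step: "mm_step V F X = Y - D"
    unfolding mm_step_def Let_def U_def Y_def D_def by simp
  have "U \<subseteq> V" "X \<inter> U = {}" unfolding U_def by auto
  have "D \<subseteq> X" unfolding D_def by auto
  have "U = {} \<Longrightarrow> Y = X" unfolding Y_def by simp
  have Y_less: "F Y < F X" if "U \<noteq> {}"
  proof -
    have "\<forall>u\<in>U. F (insert u X) < F X" unfolding U_def gain_def by simp
    then show ?thesis unfolding Y_def
      using quasi_submodular_union_improving_less[OF q finite_subset[OF \<open>U \<subseteq> V\<close> fin]
          that \<open>U \<subseteq> V\<close> XV \<open>X \<inter> U = {}\<close>] by blast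
  qed
  have D_less: "F (Y - D) < F Y" if "D \<noteq> {}"
  proof -
    have "\<forall>d\<in>D. F (Y - {d}) < F Y"
    proof
      fix d assume "d \<in> D"
      then have "insert d (Y - {d}) = Y" "gain F d (Y - {d}) > 0"
        unfolding D_def Y_def by auto
      then show "F (Y - {d}) < F Y" unfolding gain_def by simp
    qed
    moreover have "finite D" using \<open>D \<subseteq> X\<close> XV fin by (meson finite_subset)
    moreover have "D \<subseteq> Y" "Y \<subseteq> V"
      using \<open>D \<subseteq> X\<close> \<open>U \<subseteq> V\<close> XV unfolding Y_def by auto
    ultimately show ?thesis
      using quasi_submodular_diff_improving_less[OF q] that by blast
  qed
  have "U \<noteq> {} \<or> D \<noteq> {}"
    using moved step unfolding Y_def by auto
  then have "F (Y - D) < F X"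
    using Y_less D_less \<open>U = {} \<Longrightarrow> Y = X\<close> by (cases "U = {}"; cases "D = {}") auto
  then show ?thesis using step by simp
qed

theorem lemma1:
  fixes n :: nat and F :: "nat set \<Rightarrow> real" and X0 :: "nat set" and t :: nat
  assumes "quasi_submodular {1..n} F"
    and "X0 \<subseteq> {1..n}"
    and "mm_iter {1..n} F X0 (Suc t) \<noteq> mm_iter {1..n} F X0 t"
  shows "F (mm_iter {1..n} F X0 (Suc t)) < F (mm_iter {1..n} F X0 t)"
proof -
  have "mm_iter {1..n} F X0 (Suc t) = mm_step {1..n} F (mm_iter {1..n} F X0 t)"
    unfolding mm_iter_def by simp
  then show ?thesis
    using mm_step_less[OF assms(1) finite_atLeastAtMost mm_iter_subset[OF assms(2)]] assms(3)
    by simp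
qed

end
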